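(* Let $A$ be a nonnegative column-stochastic $n\times m$ matrix. If $\operatorname{rank}_+(A)\leqslant r$, then there is a polytope $P$ satisfying $\mathcal{P}_{in}(A)\subset P\subset\mathcal{P}_{out}(A)$ and $\operatorname{ic}(P)\leqslant r$.
   Context: $\operatorname{rank}_+(A)$ is the smallest $k$ such that $A$ is a sum of $k$ nonnegative rank-one matrices. A matrix is column-stochastic if each column has entries summing to $1$; so the columns of a nonnegative column-stochastic matrix lie in the standard simplex $\Delta_n=\{x\in\mathbb{R}^n: x_1+\cdots+x_n=1,\ x_i\geqslant 0\}$. $\operatorname{col}(A)$ is the linear span of the columns of $A$; $\mathcal{P}_{out}(A)=\Delta_n\cap\operatorname{col}(A)$ and $\mathcal{P}_{in}(A)$ is the convex hull of the columns of $A$. For polytopes $P\subset\mathbb{R}^d$ and $Q\subset\mathbb{R}^N$ ($N\geqslant d$), $P$ is a slice of $Q$ if $P\times\{0\}=Q\cap H$ where $H=\{x\in\mathbb{R}^N: x_{d+1}=\cdots=x_N=0\}$ (identifying $\mathbb{R}^d$ with $H$). The intersection complexity $\operatorname{ic}(P)$ is the smallest integer $k$ such that $P$ is a slice of a polytope with $k$ vertices. *)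

theory Defs
  imports Complex_Main
begin

text \<open>A point of R^N is represented as a function x :: nat => real
  with x i = 0 for all i >= N (coordinates are indexed 0..N-1).
  An n x m real matrix is a function A :: nat => nat => real, of which only the
  entries A i j with i < n and j < m are relevant.\<close>

definition euc :: "nat \<Rightarrow> (nat \<Rightarrow> real) set" where
  "euc N = {x. \<forall>i\<ge>N. x i = 0}"

definition convhull :: "(nat \<Rightarrow> real) set \<Rightarrow> (nat \<Rightarrow> real) set" where
  "convhull V = {x. \<exists>c. (\<forall>v\<in>V. 0 \<le> c v) \<and> (\<Sum>v\<in>V. c v) = 1
                        \<and> x = (\<lambda>i. \<Sum>v\<in>V. c v * v i)}"

definition polytope :: "nat \<Rightarrow> (nat \<Rightarrow> real) set \<Rightarrow> bool" where
  "polytope N Q \<longleftrightarrow> (\<exists>V. finite V \<and> V \<subseteq> euc N \<and> Q = convhull V)"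

definition vertices :: "(nat \<Rightarrow> real) set \<Rightarrow> (nat \<Rightarrow> real) set" where
  "vertices Q = {x \<in> Q. \<not> (\<exists>a\<in>Q. \<exists>b\<in>Q. a \<noteq> b \<and>
      (\<exists>t. 0 < t \<and> t < 1 \<and> x = (\<lambda>i. t * a i + (1 - t) * b i)))}"

text \<open>P (in R^d) is a slice of Q (in R^N, N >= d): P x {0} = Q \<inter> H, where
  H = {x in R^N. x_(d+1) = ... = x_N = 0}.\<close>
definition is_slice :: "nat \<Rightarrow> (nat \<Rightarrow> real) set \<Rightarrow> nat \<Rightarrow> (nat \<Rightarrow> real) set \<Rightarrow> bool" where
  "is_slice d P N Q \<longleftrightarrow> d \<le> N \<and> P = Q \<inter> {x \<in> euc N. \<forall>i. d \<le> i \<and> i < N \<longrightarrow> x i = 0}"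

definition ic :: "nat \<Rightarrow> (nat \<Rightarrow> real) set \<Rightarrow> nat" where
  "ic d P = (LEAST k. \<exists>N Q. polytope N Q \<and> card (vertices Q) = k \<and> is_slice d P N Q)"

definition nonneg_mat :: "nat \<Rightarrow> nat \<Rightarrow> (nat \<Rightarrow> nat \<Rightarrow> real) \<Rightarrow> bool" where
  "nonneg_mat n m A \<longleftrightarrow> (\<forall>i<n. \<forall>j<m. 0 \<le> A i j)"

definition col_stochastic :: "nat \<Rightarrow> nat \<Rightarrow> (nat \<Rightarrow> nat \<Rightarrow> real) \<Rightarrow> bool" where
  "col_stochastic n m A \<longleftrightarrow> (\<forall>j<m. (\<Sum>i<n. A i j) = 1)"

definition rank_one :: "nat \<Rightarrow> nat \<Rightarrow> (nat \<Rightarrow> nat \<Rightarrow> real) \<Rightarrow> bool" where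
  "rank_one n m B \<longleftrightarrow> (\<exists>u v. (\<exists>i<n. u i \<noteq> 0) \<and> (\<exists>j<m. v j \<noteq> 0)
                          \<and> (\<forall>i<n. \<forall>j<m. B i j = u i * v j))"

definition nnrank :: "nat \<Rightarrow> nat \<Rightarrow> (nat \<Rightarrow> nat \<Rightarrow> real) \<Rightarrow> nat" where
  "nnrank n m A = (LEAST k. \<exists>B :: nat \<Rightarrow> nat \<Rightarrow> nat \<Rightarrow> real.
      (\<forall>l<k. nonneg_mat n m (B l) \<and> rank_one n m (B l))
      \<and> (\<forall>i<n. \<forall>j<m. A i j = (\<Sum>l<k. B l i j)))"

definition column :: "nat \<Rightarrow> (nat \<Rightarrow> nat \<Rightarrow> real) \<Rightarrow> nat \<Rightarrow> (nat \<Rightarrow> real)" where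
  "column n A j = (\<lambda>i. if i < n then A i j else 0)"

definition simplex :: "nat \<Rightarrow> (nat \<Rightarrow> real) set" where
  "simplex n = {x \<in> euc n. (\<forall>i<n. 0 \<le> x i) \<and> (\<Sum>i<n. x i) = 1}"

definition colspace :: "nat \<Rightarrow> nat \<Rightarrow> (nat \<Rightarrow> nat \<Rightarrow> real) \<Rightarrow> (nat \<Rightarrow> real) set" where
  "colspace n m A = {x. \<exists>c. x = (\<lambda>i. \<Sum>j<m. c j * column n A j i)}"

definition P_out :: "nat \<Rightarrow> nat \<Rightarrow> (nat \<Rightarrow> nat \<Rightarrow> real) \<Rightarrow> (nat \<Rightarrow> real) set" where
  "P_out n m A = simplex n \<inter> colspace n m A"

definition P_in :: "nat \<Rightarrow> nat \<Rightarrow> (nat \<Rightarrow> nat \<Rightarrow> real) \<Rightarrow> (nat \<Rightarrow> real) set" where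
  "P_in n m A = convhull (column n A ` {..<m})"

end

theory Submission
  imports Defs
begin

text \<open>Normalise a nonnegative factorisation \<open>A = U V\<close> with \<open>k = rank\<^sub>+(A)\<close> terms so that
  \<open>U\<close> and \<open>V\<close> are column-stochastic, and take \<open>P = U(\<Delta>\<^sub>k \<inter> col V)\<close>. The columns of \<open>A\<close>
  are \<open>U\<close> applied to those of \<open>V\<close>, so \<open>P\<^sub>i\<^sub>n(A) \<subseteq> P\<close>, and \<open>U\<close> maps \<open>\<Delta>\<^sub>k\<close> into \<open>\<Delta>\<^sub>n\<close> and
  \<open>col V\<close> into \<open>col A\<close>, so \<open>P \<subseteq> P\<^sub>o\<^sub>u\<^sub>t(A)\<close>. \<open>P\<close> is a polytope because
  \<open>\<Delta>\<^sub>k \<inter> col V\<close> is the convex hull of its finitely many basic feasible solutions. Writing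
  \<open>col V\<close> as the common kernel of linear forms \<open>w\<^sub>1, \<dots>, w\<^sub>s\<close>, \<open>P\<close> is the slice
  \<open>x\<^sub>n\<^sub>+\<^sub>1 = \<dots> = x\<^sub>n\<^sub>+\<^sub>s = 0\<close> of the image of \<open>\<Delta>\<^sub>k\<close> under \<open>y \<mapsto> (U y, w\<^sub>1 y, \<dots>, w\<^sub>s y)\<close>,
  a polytope with at most \<open>k\<close> vertices.\<close>

definition is_convex :: "(nat \<Rightarrow> real) set \<Rightarrow> bool" where
  "is_convex C \<longleftrightarrow>
     (\<forall>x\<in>C. \<forall>y\<in>C. \<forall>t. 0 \<le> t \<and> t \<le> 1 \<longrightarrow> (\<lambda>i. t * x i + (1 - t) * y i) \<in> C)"

definition affine_map :: "((nat \<Rightarrow> real) \<Rightarrow> (nat \<Rightarrow> real)) \<Rightarrow> bool" where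
  "affine_map \<phi> \<longleftrightarrow>
     (\<forall>a b t. \<phi> (\<lambda>i. t * a i + (1 - t) * b i) = (\<lambda>i. t * \<phi> a i + (1 - t) * \<phi> b i))"

definition is_subspace :: "(nat \<Rightarrow> real) set \<Rightarrow> bool" where
  "is_subspace L \<longleftrightarrow> (\<forall>x\<in>L. \<forall>y\<in>L. \<forall>a b. (\<lambda>i. a * x i + b * y i) \<in> L)"

lemma is_convex_sum:
  assumes "is_convex C" "finite I" "\<forall>l\<in>I. 0 \<le> a l" "sum a I = 1" "\<forall>l\<in>I. f l \<in> C"
  shows "(\<lambda>i. \<Sum>l\<in>I. a l * f l i) \<in> C"
  using assms(2-)
proof (induction I arbitrary: a rule: finite_induct)
  case empty
  then show ?case by simp
next
  case (insert x I)
  have ax: "0 \<le> a x" "f x \<in> C" using insert.prems by auto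
  have "0 \<le> sum a I" using insert.prems by (intro sum_nonneg) auto
  then have "a x \<le> 1" using insert by simp
  show ?case
  proof (cases "a x = 1")
    case True
    then have "sum a I = 0" using insert by simp
    then have "\<forall>l\<in>I. a l = 0" using insert by (simp add: sum_nonneg_eq_0_iff)
    then have "(\<lambda>i. \<Sum>l\<in>insert x I. a l * f l i) = f x" using insert True by auto
    then show ?thesis using ax by simp
  next
    case False
    define s where "s = 1 - a x"
    have s: "sum a I = s" "s > 0" using insert \<open>a x \<le> 1\<close> False by (auto simp: s_def)
    have rest: "(\<lambda>i. \<Sum>l\<in>I. (a l / s) * f l i) \<in> C"
      using insert s by (intro insert.IH) (auto simp: sum_divide_distrib[symmetric])
    have "(\<lambda>i. \<Sum>l\<in>insert x I. a l * f l i)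
        = (\<lambda>i. a x * f x i + (1 - a x) * (\<Sum>l\<in>I. (a l / s) * f l i))"
      using insert s by (auto simp: sum_distrib_left s_def)
    then show ?thesis using assms(1) rest ax \<open>a x \<le> 1\<close> unfolding is_convex_def by auto
  qed
qed

lemma convhull_minimal:
  assumes "is_convex C" "finite V" "V \<subseteq> C"
  shows "convhull V \<subseteq> C"
proof
  fix x assume "x \<in> convhull V"
  then obtain c where c: "\<forall>v\<in>V. 0 \<le> c v" "(\<Sum>v\<in>V. c v) = 1" "x = (\<lambda>i. \<Sum>v\<in>V. c v * v i)"
    unfolding convhull_def by auto
  show "x \<in> C" unfolding c(3) using assms c by (intro is_convex_sum) auto
qed

lemma is_convex_convhull: "is_convex (convhull V)"
  unfolding is_convex_def
proof (intro ballI allI impI)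
  fix x y and t :: real
  assume "x \<in> convhull V" "y \<in> convhull V" and t: "0 \<le> t \<and> t \<le> 1"
  then obtain c d where
    c: "\<forall>v\<in>V. 0 \<le> c v" "(\<Sum>v\<in>V. c v) = 1" "x = (\<lambda>i. \<Sum>v\<in>V. c v * v i)" and
    d: "\<forall>v\<in>V. 0 \<le> d v" "(\<Sum>v\<in>V. d v) = 1" "y = (\<lambda>i. \<Sum>v\<in>V. d v * v i)"
    unfolding convhull_def by auto
  show "(\<lambda>i. t * x i + (1 - t) * y i) \<in> convhull V"
    unfolding convhull_def
  proof (intro CollectI exI[of _ "\<lambda>v. t * c v + (1 - t) * d v"] conjI)
    show "\<forall>v\<in>V. 0 \<le> t * c v + (1 - t) * d v" using c d t by auto
    show "(\<Sum>v\<in>V. t * c v + (1 - t) * d v) = 1"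
      using c d by (simp add: sum.distrib sum_distrib_left[symmetric])
    show "(\<lambda>i. t * x i + (1 - t) * y i) = (\<lambda>i. \<Sum>v\<in>V. (t * c v + (1 - t) * d v) * v i)"
      using c d by (simp add: sum_distrib_left sum.distrib distrib_right mult.assoc)
  qed
qed

lemma convhull_superset: "finite V \<Longrightarrow> V \<subseteq> convhull V"
  unfolding convhull_def
  by (auto intro!: exI[of _ "\<lambda>v. if v = _ then 1 else 0"]
           simp: if_distrib[of "\<lambda>c. c * _"] cong: if_cong)

lemma convhull_split_point:
  assumes V: "finite V" "v \<in> V" and c: "\<forall>v\<in>V. 0 \<le> c v" "(\<Sum>v\<in>V. c v) = 1" "c v < 1"
  shows "\<exists>x'\<in>convhull V. (\<lambda>i. \<Sum>u\<in>V. c u * u i) = (\<lambda>i. c v * v i + (1 - c v) * x' i)"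
proof -
  have rest: "(\<Sum>u\<in>V - {v}. c u) = 1 - c v" using V c by (simp add: sum_diff1)
  define c' where "c' u = (if u = v then 0 else c u / (1 - c v))" for u
  define x' where "x' = (\<lambda>i. \<Sum>u\<in>V. c' u * u i)"
  have "(\<Sum>u\<in>V. c' u) = (\<Sum>u\<in>V - {v}. c u / (1 - c v))"
    using V by (simp add: c'_def sum.remove sum.If_cases Diff_eq Int_commute)
  also have "\<dots> = 1" using rest c by (simp add: sum_divide_distrib[symmetric])
  finally have "(\<Sum>u\<in>V. c' u) = 1" .
  moreover have "\<forall>u\<in>V. 0 \<le> c' u" using c by (simp add: c'_def)
  ultimately have "x' \<in> convhull V" unfolding convhull_def x'_def by blast
  moreover have "(\<Sum>u\<in>V. c u * u i) = c v * v i + (1 - c v) * x' i" for i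
    using c by (simp add: x'_def c'_def sum.remove[OF V] sum_distrib_left)
  ultimately show ?thesis by auto
qed

lemma vertices_convhull_subset:
  assumes V: "finite V" shows "vertices (convhull V) \<subseteq> V"
proof
  fix x assume xv: "x \<in> vertices (convhull V)"
  then obtain c where c: "\<forall>v\<in>V. 0 \<le> c v" "(\<Sum>v\<in>V. c v) = 1" "x = (\<lambda>i. \<Sum>v\<in>V. c v * v i)"
    unfolding vertices_def convhull_def by auto
  obtain v where v: "v \<in> V" "c v > 0"
    using c(1,2) by (metis less_eq_real_def sum.neutral zero_neq_one)
  show "x \<in> V"
  proof (cases "c v = 1")
    case True
    then have "sum c (V - {v}) = 0" using V v c by (simp add: sum_diff1)
    then have "\<forall>u\<in>V - {v}. c u = 0" using V c by (subst (asm) sum_nonneg_eq_0_iff) auto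
    then have "x = v" unfolding c(3) using True by (simp add: sum.remove[OF V v(1)])
    then show ?thesis using v by simp
  next
    case False
    have "c v \<le> 1" using V v c by (metis sum_nonneg_leq_bound)
    then obtain x' where x': "x' \<in> convhull V" "x = (\<lambda>i. c v * v i + (1 - c v) * x' i)"
      using convhull_split_point[OF V v(1) c(1,2)] False c(3) by force
    have "v \<in> convhull V" using convhull_superset[OF V] v by auto
    then have "v = x'" using xv x' v False \<open>c v \<le> 1\<close> unfolding vertices_def by force
    then show ?thesis using x' v by (auto simp: algebra_simps)
  qed
qed

lemma is_convex_image:
  assumes "is_convex C" "affine_map \<phi>" shows "is_convex (\<phi> ` C)"
  unfolding is_convex_def
proof (intro ballI allI impI)
  fix x y and t :: real assume "x \<in> \<phi> ` C" "y \<in> \<phi> ` C" "0 \<le> t \<and> t \<le> 1"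
  then obtain a b where ab: "x = \<phi> a" "y = \<phi> b"
    and comb: "(\<lambda>i. t * a i + (1 - t) * b i) \<in> C" using assms(1) unfolding is_convex_def by blast
  have "(\<lambda>i. t * x i + (1 - t) * y i) = \<phi> (\<lambda>i. t * a i + (1 - t) * b i)"
    using assms(2) unfolding ab affine_map_def by simp
  then show "(\<lambda>i. t * x i + (1 - t) * y i) \<in> \<phi> ` C" using comb by blast
qed

lemma is_convex_vimage:
  assumes "is_convex C" "affine_map \<phi>" shows "is_convex (\<phi> -` C)"
  using assms unfolding is_convex_def affine_map_def by simp

lemma convhull_image:
  assumes "finite V" "affine_map \<phi>" shows "convhull (\<phi> ` V) = \<phi> ` convhull V"
proof
  show "convhull (\<phi> ` V) \<subseteq> \<phi> ` convhull V"
    using assms convhull_superset[OF assms(1)]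
    by (intro convhull_minimal is_convex_image is_convex_convhull) auto
  have "convhull V \<subseteq> \<phi> -` convhull (\<phi> ` V)"
    using assms convhull_superset[of "\<phi> ` V"]
    by (intro convhull_minimal is_convex_vimage is_convex_convhull) auto
  then show "\<phi> ` convhull V \<subseteq> convhull (\<phi> ` V)" by blast
qed

lemma is_convex_Int: "is_convex C \<Longrightarrow> is_convex D \<Longrightarrow> is_convex (C \<inter> D)"
  unfolding is_convex_def by blast

lemma is_convex_subspace: "is_subspace L \<Longrightarrow> is_convex L"
  unfolding is_subspace_def is_convex_def by blast

lemma is_convex_simplex: "is_convex (simplex k)"
  unfolding is_convex_def simplex_def euc_def
  by (auto simp: sum.distrib sum_distrib_left[symmetric])

lemma sum_convex_comb:
  fixes f a b :: "'a \<Rightarrow> real"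
  shows "(\<Sum>l\<in>I. f l * (t * a l + (1 - t) * b l))
           = t * (\<Sum>l\<in>I. f l * a l) + (1 - t) * (\<Sum>l\<in>I. f l * b l)"
proof -
  have "(\<Sum>l\<in>I. f l * (t * a l + (1 - t) * b l))
      = (\<Sum>l\<in>I. t * (f l * a l) + (1 - t) * (f l * b l))"
    by (intro sum.cong refl) (simp add: algebra_simps)
  then show ?thesis by (simp add: sum.distrib sum_distrib_left)
qed

definition dot :: "nat \<Rightarrow> (nat \<Rightarrow> real) \<Rightarrow> (nat \<Rightarrow> real) \<Rightarrow> real" where
  "dot k w y = (\<Sum>l<k. w l * y l)"

definition solutions :: "nat \<Rightarrow> (nat \<Rightarrow> real) list \<Rightarrow> (nat \<Rightarrow> real) set" where
  "solutions k ws = {y \<in> euc k. \<forall>w\<in>set ws. dot k w y = 0}"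

definition unit_vec :: "nat \<Rightarrow> nat \<Rightarrow> real" where
  "unit_vec l = (\<lambda>l'. if l' = l then 1 else 0)"

lemma dot_add_scaled: "dot k w (\<lambda>l. a l + c * b l) = dot k w a + c * dot k w b"
  by (simp add: dot_def algebra_simps sum.distrib sum_distrib_left)

lemma dot_sub_scaled_left: "dot k (\<lambda>l. w l - c * w' l) y = dot k w y - c * dot k w' y"
  by (simp add: dot_def algebra_simps sum_subtractf sum_distrib_left)

lemma dot_convex_comb: "dot k w (\<lambda>i. t * a i + (1 - t) * b i) = t * dot k w a + (1 - t) * dot k w b"
  by (simp add: dot_def sum_convex_comb)

lemma dot_unit_vec: "l < k \<Longrightarrow> dot k (unit_vec l) y = y l"
  by (simp add: dot_def unit_vec_def if_distrib[of "\<lambda>c. c * _"] cong: if_cong)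

lemma euc_add_scaled: "a \<in> euc k \<Longrightarrow> b \<in> euc k \<Longrightarrow> (\<lambda>l. a l + c * b l) \<in> euc k"
  by (simp add: euc_def)

lemma solutions_add_line:
  assumes v: "v \<in> euc k"
  shows "\<exists>ws'. solutions k ws' = {\<lambda>l. a l + g * v l | a g. a \<in> solutions k ws}"
proof (cases "\<forall>w\<in>set ws. dot k w v = 0")
  case True
  have "solutions k ws = {\<lambda>l. a l + g * v l | a g. a \<in> solutions k ws}"
  proof (intro set_eqI iffI)
    fix y assume "y \<in> solutions k ws"
    then show "y \<in> {\<lambda>l. a l + g * v l | a g. a \<in> solutions k ws}"
      by (intro CollectI exI[of _ y] exI[of _ 0]) simp
  next
    fix y assume "y \<in> {\<lambda>l. a l + g * v l | a g. a \<in> solutions k ws}"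
    then show "y \<in> solutions k ws"
      using True v by (auto simp: solutions_def dot_add_scaled euc_add_scaled)
  qed
  then show ?thesis by blast
next
  case False
  then obtain w1 where w1: "w1 \<in> set ws" "dot k w1 v \<noteq> 0" by blast
  \<comment> \<open>Use the equation \<open>w1\<close> to eliminate the component along \<open>v\<close> from the others.\<close>
  define ws' where "ws' = map (\<lambda>w l. w l - (dot k w v / dot k w1 v) * w1 l) ws"
  have sol': "y \<in> solutions k ws' \<longleftrightarrow>
      y \<in> euc k \<and> (\<forall>w\<in>set ws. dot k w y - dot k w v / dot k w1 v * dot k w1 y = 0)" for y
    unfolding solutions_def ws'_def by (simp only: mem_Collect_eq set_map ball_simps dot_sub_scaled_left)
  have "solutions k ws' = {\<lambda>l. a l + g * v l | a g. a \<in> solutions k ws}"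
  proof (intro set_eqI iffI)
    fix y assume y: "y \<in> solutions k ws'"
    define g where "g = dot k w1 y / dot k w1 v"
    have y': "y \<in> euc k" "\<forall>w\<in>set ws. dot k w y - dot k w v / dot k w1 v * dot k w1 y = 0"
      using y sol' by auto
    have "dot k w (\<lambda>l. y l + (- g) * v l) = 0" if "w \<in> set ws" for w
      unfolding dot_add_scaled g_def using y'(2) that by (simp add: algebra_simps)
    then have "(\<lambda>l. y l + (- g) * v l) \<in> solutions k ws"
      unfolding solutions_def using euc_add_scaled[OF y'(1) v] by blast
    then show "y \<in> {\<lambda>l. a l + g * v l | a g. a \<in> solutions k ws}"
      by (intro CollectI exI[of _ "\<lambda>l. y l + (- g) * v l"] exI[of _ g]) simp
  next
    fix y assume "y \<in> {\<lambda>l. a l + g * v l | a g. a \<in> solutions k ws}"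
    then obtain a g where a: "a \<in> solutions k ws" and y: "y = (\<lambda>l. a l + g * v l)" by blast
    have "dot k w a = 0" if "w \<in> set ws" for w using a that by (simp add: solutions_def)
    then show "y \<in> solutions k ws'"
      unfolding sol' y dot_add_scaled using a v w1 by (auto simp: solutions_def euc_add_scaled)
  qed
  then show ?thesis by blast
qed

lemma colspace_Suc:
  "colspace k (Suc m) V = {\<lambda>l. a l + g * column k V m l | a g. a \<in> colspace k m V}"
proof (intro set_eqI iffI)
  fix y assume "y \<in> colspace k (Suc m) V"
  then obtain c where "y = (\<lambda>i. \<Sum>j<Suc m. c j * column k V j i)" by (auto simp: colspace_def)
  then show "y \<in> {\<lambda>l. a l + g * column k V m l | a g. a \<in> colspace k m V}"
    by (auto simp: colspace_def)
next
  fix y assume "y \<in> {\<lambda>l. a l + g * column k V m l | a g. a \<in> colspace k m V}"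
  then obtain c g where "y = (\<lambda>l. (\<Sum>j<m. c j * column k V j l) + g * column k V m l)"
    by (auto simp: colspace_def)
  then have "y = (\<lambda>l. \<Sum>j<Suc m. (c(m := g)) j * column k V j l)" by simp
  then show "y \<in> colspace k (Suc m) V" unfolding colspace_def by blast
qed

lemma colspace_eq_solutions: "\<exists>ws. colspace k m V = solutions k ws"
proof (induction m)
  case 0
  have "y \<in> solutions k (map unit_vec [0..<k]) \<longleftrightarrow> (\<forall>i\<ge>k. y i = 0) \<and> (\<forall>i<k. y i = 0)"
    for y by (auto simp: solutions_def euc_def dot_unit_vec)
  also have "\<dots> y \<longleftrightarrow> y = (\<lambda>l. 0)" for y unfolding fun_eq_iff by (meson not_le)
  finally have "solutions k (map unit_vec [0..<k]) = {\<lambda>l. 0}" by blast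
  then show ?case by (auto simp: colspace_def)
next
  case (Suc m)
  then obtain ws where ws: "colspace k m V = solutions k ws" by blast
  have "column k V m \<in> euc k" by (simp add: column_def euc_def)
  then obtain ws' where
    "solutions k ws' = {\<lambda>l. a l + g * column k V m l | a g. a \<in> solutions k ws}"
    using solutions_add_line by blast
  then show ?case unfolding colspace_Suc ws by blast
qed

definition support :: "nat \<Rightarrow> (nat \<Rightarrow> real) \<Rightarrow> nat set" where
  "support k y = {l. l < k \<and> y l \<noteq> 0}"

text \<open>The basic feasible solutions, i.e.\ vertices, of \<open>\<Delta>\<^sub>k \<inter> L\<close>. Each is determined by its
  support, so there are finitely many.\<close>
definition basic_points :: "nat \<Rightarrow> (nat \<Rightarrow> real) set \<Rightarrow> (nat \<Rightarrow> real) set" where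
  "basic_points k L = {y \<in> simplex k \<inter> L. \<forall>z \<in> L \<inter> euc k.
      support k z \<subseteq> support k y \<and> (\<Sum>l<k. z l) = 0 \<longrightarrow> z = (\<lambda>l. 0)}"

lemma subspace_add_scaled:
  assumes "is_subspace L" "x \<in> L" "y \<in> L" shows "(\<lambda>i. x i + c * y i) \<in> L"
proof -
  have "(\<lambda>i. 1 * x i + c * y i) \<in> L" using assms unfolding is_subspace_def by blast
  then show ?thesis by simp
qed

lemma subspace_scaled:
  assumes "is_subspace L" "x \<in> L" shows "(\<lambda>i. c * x i) \<in> L"
proof -
  have "(\<lambda>i. c * x i + 0 * x i) \<in> L" using assms unfolding is_subspace_def by blast
  then show ?thesis by simp
qed

lemma euc_eq_zeroI: "z \<in> euc k \<Longrightarrow> (\<forall>l<k. z l = 0) \<Longrightarrow> z = (\<lambda>l. 0)"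
  unfolding euc_def by (auto simp: not_less[symmetric])

lemma zero_sum_has_pos_coord:
  assumes "z \<in> euc k" "(\<Sum>l<k. z l) = 0" "z \<noteq> (\<lambda>l. 0)"
  shows "\<exists>p<k. z p > 0"
proof (rule ccontr)
  assume "\<not> ?thesis"
  then have "\<forall>l<k. - z l \<ge> 0" by auto
  then have "\<forall>l<k. z l = 0"
    using assms(2) sum_nonneg_eq_0_iff[of "{..<k}" "\<lambda>l. - z l"] by (simp add: sum_negf)
  then show False using assms euc_eq_zeroI by blast
qed

lemma finite_basic_points:
  assumes L: "is_subspace L" shows "finite (basic_points k L)"
proof (rule inj_on_finite[of "support k" _ "Pow {..<k}"])
  show "inj_on (support k) (basic_points k L)"
  proof (rule inj_onI)
    fix y y' assume y: "y \<in> basic_points k L" and y': "y' \<in> basic_points k L"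
      and supp: "support k y = support k y'"
    have y_in: "y \<in> simplex k" "y \<in> L" and y'_in: "y' \<in> simplex k" "y' \<in> L"
      and basic: "\<forall>z\<in>L \<inter> euc k. support k z \<subseteq> support k y \<and> (\<Sum>l<k. z l) = 0 \<longrightarrow> z = (\<lambda>l. 0)"
      using y y' unfolding basic_points_def by auto
    have same_zeros: "\<forall>l<k. y l = 0 \<longleftrightarrow> y' l = 0"
      using supp by (auto simp: support_def set_eq_iff)
    define z where "z = (\<lambda>l. y l + (-1) * y' l)"
    have "z \<in> L" unfolding z_def using subspace_add_scaled[OF L y_in(2) y'_in(2)] .
    moreover have "z \<in> euc k"
      using y_in(1) y'_in(1) by (simp add: z_def simplex_def euc_def)
    moreover have "support k z \<subseteq> support k y" using same_zeros by (auto simp: support_def z_def)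
    moreover have "(\<Sum>l<k. z l) = 0"
      using y_in(1) y'_in(1) by (simp add: z_def simplex_def sum_subtractf)
    ultimately have "z = (\<lambda>l. 0)" using basic by blast
    then show "y = y'" by (simp add: z_def fun_eq_iff)
  qed
qed (auto simp: support_def)

text \<open>The ratio test of the simplex method: step from \<open>y\<close> against \<open>z\<close> as far as nonnegativity
  allows, which zeroes a coordinate.\<close>
lemma simplex_Int_subspace_shrink_support:
  assumes L: "is_subspace L" and y: "y \<in> simplex k \<inter> L"
    and z: "z \<in> L \<inter> euc k" "support k z \<subseteq> support k y" "(\<Sum>l<k. z l) = 0"
    and p: "p < k" "z p > 0"
  shows "\<exists>t>0. (\<lambda>l. y l + (-t) * z l) \<in> simplex k \<inter> L \<and>
           card (support k (\<lambda>l. y l + (-t) * z l)) < card (support k y)"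
proof -
  define S where "S = {l. l < k \<and> z l > 0}"
  have S: "finite S" "S \<noteq> {}" using p by (auto simp: S_def)
  define t where "t = Min ((\<lambda>l. y l / z l) ` S)"
  have "t \<in> (\<lambda>l. y l / z l) ` S" unfolding t_def using S by (intro Min_in) auto
  then obtain l1 where l1: "l1 \<in> S" "t = y l1 / z l1" by blast
  have t_le: "t \<le> y l / z l" if "l \<in> S" for l using S that unfolding t_def by simp
  have y_pos: "y l > 0" if "l \<in> S" for l
  proof -
    have "l \<in> support k y" using z(2) that by (auto simp: S_def support_def)
    then show ?thesis using y by (auto simp: support_def simplex_def less_le)
  qed
  have "t > 0" using l1 y_pos[OF l1(1)] by (simp add: S_def)
  define y' where "y' = (\<lambda>l. y l + (-t) * z l)"
  have "y' \<in> euc k" "y' \<in> L"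
    using y z(1) euc_add_scaled[of y k z "-t"] subspace_add_scaled[OF L, of y z "-t"]
    unfolding y'_def simplex_def by auto
  moreover have "0 \<le> y' l" if "l < k" for l
  proof (cases "l \<in> S")
    case True
    then show ?thesis using t_le[OF True] by (simp add: y'_def S_def pos_le_divide_eq)
  next
    case False
    then have "t * z l \<le> 0" using \<open>t > 0\<close> that by (simp add: S_def mult_nonneg_nonpos)
    moreover have "0 \<le> y l" using y that by (simp add: simplex_def)
    ultimately show ?thesis by (simp add: y'_def)
  qed
  moreover have "(\<Sum>l<k. y' l) = 1"
    using y z(3) by (simp add: y'_def simplex_def sum_subtractf sum_distrib_left[symmetric])
  moreover have "support k y' \<subset> support k y"
  proof
    show "support k y' \<subseteq> support k y" using z(2) by (auto simp: support_def y'_def)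
    have "y' l1 = 0" "l1 \<in> support k y"
      using l1 y_pos[OF l1(1)] by (auto simp: y'_def S_def support_def)
    then show "support k y' \<noteq> support k y" by (auto simp: support_def)
  qed
  then have "card (support k y') < card (support k y)"
    by (rule psubset_card_mono[rotated]) (simp add: support_def)
  ultimately have "y' \<in> simplex k \<inter> L \<and> card (support k y') < card (support k y)"
    by (simp add: simplex_def)
  then show ?thesis using \<open>t > 0\<close> unfolding y'_def by blast
qed

lemma simplex_Int_subspace_subset_convex:
  assumes L: "is_subspace L" and C: "is_convex C" "basic_points k L \<subseteq> C"
  shows "simplex k \<inter> L \<subseteq> C"
proof
  fix y assume "y \<in> simplex k \<inter> L"
  then show "y \<in> C"
  proof (induction "card (support k y)" arbitrary: y rule: less_induct)
    case less
    show ?case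
    proof (cases "y \<in> basic_points k L")
      case True
      then show ?thesis using C by blast
    next
      case False
      then obtain z where z: "z \<in> L \<inter> euc k" "support k z \<subseteq> support k y" "(\<Sum>l<k. z l) = 0"
        and "z \<noteq> (\<lambda>l. 0)"
        using less.prems unfolding basic_points_def by blast
      \<comment> \<open>Both \<open>z\<close> and \<open>-z\<close> have a positive coordinate, so \<open>y\<close> lies strictly between two points
        of smaller support.\<close>
      define z' where "z' = (\<lambda>l. (-1) * z l)"
      have "z' \<in> L" unfolding z'_def using subspace_scaled[OF L] z(1) by blast
      then have z': "z' \<in> L \<inter> euc k" "support k z' \<subseteq> support k y" "(\<Sum>l<k. z' l) = 0"
        using z by (auto simp: z'_def euc_def support_def sum_negf)
      obtain p where "p < k" "z p > 0"
        using zero_sum_has_pos_coord z \<open>z \<noteq> (\<lambda>l. 0)\<close> by blast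
      then obtain t1 where t1: "t1 > 0" "(\<lambda>l. y l + (-t1) * z l) \<in> simplex k \<inter> L"
        "card (support k (\<lambda>l. y l + (-t1) * z l)) < card (support k y)"
        using simplex_Int_subspace_shrink_support[OF L less.prems z] by blast
      have "z' \<noteq> (\<lambda>l. 0)" using \<open>z \<noteq> (\<lambda>l. 0)\<close> by (auto simp: z'_def fun_eq_iff)
      then obtain q where "q < k" "z' q > 0"
        using zero_sum_has_pos_coord z' by blast
      then obtain t2 where t2: "t2 > 0" "(\<lambda>l. y l + (-t2) * z' l) \<in> simplex k \<inter> L"
        "card (support k (\<lambda>l. y l + (-t2) * z' l)) < card (support k y)"
        using simplex_Int_subspace_shrink_support[OF L less.prems z'] by blast
      have "(\<lambda>l. y l + (-t1) * z l) \<in> C" "(\<lambda>l. y l + (-t2) * z' l) \<in> C"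
        using less.hyps t1 t2 by blast+
      moreover define s where "s = t2 / (t1 + t2)"
      have "0 \<le> s" "s \<le> 1" using t1 t2 by (auto simp: s_def)
      moreover have "y = (\<lambda>l. s * (y l + (-t1) * z l) + (1 - s) * (y l + (-t2) * z' l))"
      proof
        fix l
        have "s * (y l + (-t1) * z l) + (1 - s) * (y l + (-t2) * z' l)
            = y l + ((1 - s) * t2 - s * t1) * z l"
          by (simp add: z'_def algebra_simps)
        moreover have "(1 - s) * t2 = s * t1" using t1 t2 by (simp add: s_def field_simps)
        ultimately show "y l = s * (y l + (-t1) * z l) + (1 - s) * (y l + (-t2) * z' l)" by simp
      qed
      ultimately show ?thesis using C(1) unfolding is_convex_def by metis
    qed
  qed
qed

lemma simplex_Int_subspace_eq_convhull:
  assumes L: "is_subspace L" shows "simplex k \<inter> L = convhull (basic_points k L)"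
proof
  show "simplex k \<inter> L \<subseteq> convhull (basic_points k L)"
    using L convhull_superset[OF finite_basic_points[OF L]]
    by (intro simplex_Int_subspace_subset_convex is_convex_convhull)
  show "convhull (basic_points k L) \<subseteq> simplex k \<inter> L"
    using L finite_basic_points[OF L]
    by (intro convhull_minimal is_convex_Int is_convex_simplex is_convex_subspace)
       (auto simp: basic_points_def)
qed

lemma simplex_eq_convhull_unit_vec: "simplex k = convhull (unit_vec ` {..<k})"
proof
  show "simplex k \<subseteq> convhull (unit_vec ` {..<k})"
  proof
    fix y assume y: "y \<in> simplex k"
    have "y = (\<lambda>i. \<Sum>l\<in>{..<k}. y l * unit_vec l i)"
    proof
      fix i
      show "y i = (\<Sum>l\<in>{..<k}. y l * unit_vec l i)"
        using y by (cases "i < k")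
          (auto simp: unit_vec_def simplex_def euc_def if_distrib[of "\<lambda>c. _ * c"] cong: if_cong)
    qed
    also have "\<dots> \<in> convhull (unit_vec ` {..<k})"
      using y convhull_superset[of "unit_vec ` {..<k}"]
      by (intro is_convex_sum is_convex_convhull) (auto simp: simplex_def)
    finally show "y \<in> convhull (unit_vec ` {..<k})" .
  qed
  have "unit_vec l \<in> simplex k" if "l < k" for l
    using that by (simp add: simplex_def euc_def unit_vec_def)
  then show "convhull (unit_vec ` {..<k}) \<subseteq> simplex k"
    by (intro convhull_minimal is_convex_simplex) auto
qed

definition mat_vec :: "nat \<Rightarrow> nat \<Rightarrow> (nat \<Rightarrow> nat \<Rightarrow> real) \<Rightarrow> (nat \<Rightarrow> real) \<Rightarrow> nat \<Rightarrow> real" where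
  "mat_vec n k U y = (\<lambda>i. if i < n then \<Sum>l<k. U i l * y l else 0)"

lemma mat_vec_euc: "mat_vec n k U y \<in> euc n"
  by (simp add: mat_vec_def euc_def)

lemma affine_map_mat_vec: "affine_map (mat_vec n k U)"
  by (simp add: affine_map_def mat_vec_def fun_eq_iff sum_convex_comb)

lemma polytope_mat_vec_simplex_Int:
  assumes L: "is_subspace L" shows "polytope n (mat_vec n k U ` (simplex k \<inter> L))"
proof -
  have "mat_vec n k U ` (simplex k \<inter> L) = convhull (mat_vec n k U ` basic_points k L)"
    using L finite_basic_points[OF L] affine_map_mat_vec
    by (simp add: simplex_Int_subspace_eq_convhull convhull_image)
  then show ?thesis
    unfolding polytope_def using finite_basic_points[OF L] mat_vec_euc
    by (intro exI[of _ "mat_vec n k U ` basic_points k L"]) auto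
qed

lemma polytope_affine_image_simplex:
  assumes \<phi>: "affine_map \<phi>" "\<And>y. \<phi> y \<in> euc N"
  shows "polytope N (\<phi> ` simplex k)" "card (vertices (\<phi> ` simplex k)) \<le> k"
proof -
  have image: "\<phi> ` simplex k = convhull (\<phi> ` unit_vec ` {..<k})"
    unfolding simplex_eq_convhull_unit_vec by (rule convhull_image[symmetric, OF _ \<phi>(1)]) simp
  then show "polytope N (\<phi> ` simplex k)"
    unfolding polytope_def using \<phi>(2) by (intro exI[of _ "\<phi> ` unit_vec ` {..<k}"]) auto
  have "card (vertices (\<phi> ` simplex k)) \<le> card (\<phi> ` unit_vec ` {..<k})"
    unfolding image by (intro card_mono vertices_convhull_subset) auto
  also have "\<dots> \<le> k"
    using card_image_le[of "{..<k}" "\<phi> \<circ> unit_vec"] by (simp add: image_comp)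
  finally show "card (vertices (\<phi> ` simplex k)) \<le> k" .
qed

definition extended_map ::
    "nat \<Rightarrow> nat \<Rightarrow> (nat \<Rightarrow> nat \<Rightarrow> real) \<Rightarrow> (nat \<Rightarrow> real) list \<Rightarrow> (nat \<Rightarrow> real) \<Rightarrow> nat \<Rightarrow> real"
  where "extended_map n k U ws y = (\<lambda>i. if i < n then mat_vec n k U y i
                                      else if i < n + length ws then dot k (ws ! (i - n)) y else 0)"

lemma affine_map_extended_map: "affine_map (extended_map n k U ws)"
  by (simp add: affine_map_def extended_map_def fun_eq_iff dot_convex_comb
      affine_map_mat_vec[unfolded affine_map_def])

lemma extended_map_euc: "extended_map n k U ws y \<in> euc (n + length ws)"
  by (simp add: extended_map_def euc_def)

lemma extended_map_in_slice_iff: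
  "extended_map n k U ws y \<in> {x \<in> euc (n + length ws). \<forall>i. n \<le> i \<and> i < n + length ws \<longrightarrow> x i = 0}
     \<longleftrightarrow> (\<forall>w\<in>set ws. dot k w y = 0)"
proof -
  have "extended_map n k U ws y
          \<in> {x \<in> euc (n + length ws). \<forall>i. n \<le> i \<and> i < n + length ws \<longrightarrow> x i = 0}
     \<longleftrightarrow> (\<forall>i. n \<le> i \<and> i < n + length ws \<longrightarrow> dot k (ws ! (i - n)) y = 0)"
    using extended_map_euc by (simp add: extended_map_def)
  also have "\<dots> \<longleftrightarrow> (\<forall>j<length ws. dot k (ws ! j) y = 0)"
  proof
    assume h: "\<forall>i. n \<le> i \<and> i < n + length ws \<longrightarrow> dot k (ws ! (i - n)) y = 0"
    show "\<forall>j<length ws. dot k (ws ! j) y = 0"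
    proof (intro allI impI)
      fix j assume "j < length ws"
      then show "dot k (ws ! j) y = 0" using h[rule_format, of "n + j"] by simp
    qed
  qed auto
  also have "\<dots> \<longleftrightarrow> (\<forall>w\<in>set ws. dot k w y = 0)" by (simp add: all_set_conv_all_nth)
  finally show ?thesis .
qed

lemma extended_map_eq_mat_vec:
  "\<forall>w\<in>set ws. dot k w y = 0 \<Longrightarrow> extended_map n k U ws y = mat_vec n k U y"
  by (auto simp: extended_map_def mat_vec_def fun_eq_iff)

lemma is_slice_extended_map:
  "is_slice n (mat_vec n k U ` (simplex k \<inter> solutions k ws))
     (n + length ws) (extended_map n k U ws ` simplex k)"
proof -
  define H where "H = {x \<in> euc (n + length ws). \<forall>i. n \<le> i \<and> i < n + length ws \<longrightarrow> x i = 0}"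
  have "extended_map n k U ws ` simplex k \<inter> H = mat_vec n k U ` (simplex k \<inter> solutions k ws)"
  proof (intro set_eqI iffI)
    fix x assume "x \<in> extended_map n k U ws ` simplex k \<inter> H"
    then obtain y where y: "y \<in> simplex k" "x = extended_map n k U ws y"
      and "\<forall>w\<in>set ws. dot k w y = 0"
      using extended_map_in_slice_iff unfolding H_def by blast
    then have "y \<in> simplex k \<inter> solutions k ws" "x = mat_vec n k U y"
      by (simp_all add: solutions_def simplex_def extended_map_eq_mat_vec)
    then show "x \<in> mat_vec n k U ` (simplex k \<inter> solutions k ws)" by blast
  next
    fix x assume "x \<in> mat_vec n k U ` (simplex k \<inter> solutions k ws)"
    then obtain y where y: "y \<in> simplex k" "y \<in> solutions k ws" "x = mat_vec n k U y" by blast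
    then have "\<forall>w\<in>set ws. dot k w y = 0" by (simp add: solutions_def)
    then have "extended_map n k U ws y = x" "extended_map n k U ws y \<in> H"
      using y(3) extended_map_eq_mat_vec extended_map_in_slice_iff unfolding H_def by blast+
    then show "x \<in> extended_map n k U ws ` simplex k \<inter> H" using y(1) by blast
  qed
  then show ?thesis by (simp add: is_slice_def H_def)
qed

lemma ic_mat_vec_simplex_Int_solutions:
  "ic n (mat_vec n k U ` (simplex k \<inter> solutions k ws)) \<le> k"
proof -
  let ?Q = "extended_map n k U ws ` simplex k"
  have "polytope (n + length ws) ?Q" "card (vertices ?Q) \<le> k"
    using polytope_affine_image_simplex affine_map_extended_map extended_map_euc by blast+
  moreover have "ic n (mat_vec n k U ` (simplex k \<inter> solutions k ws)) \<le> card (vertices ?Q)"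
    unfolding ic_def using is_slice_extended_map \<open>polytope (n + length ws) ?Q\<close>
    by (intro Least_le) blast
  ultimately show ?thesis by linarith
qed

lemma rank_one_column:
  assumes "j0 < m" "\<exists>i<n. A i j0 \<noteq> 0"
  shows "rank_one n m (\<lambda>i j. if j = j0 then A i j0 else 0)"
  unfolding rank_one_def using assms
  by (intro exI[of _ "\<lambda>i. A i j0"] exI[of _ "\<lambda>j. if j = j0 then 1 else 0"]) auto

lemma nonneg_rank_one_decomposition_exists:
  assumes A: "nonneg_mat n m A"
  shows "\<exists>(k::nat) B. (\<forall>l<k. nonneg_mat n m (B l) \<and> rank_one n m (B l))
               \<and> (\<forall>i<n. \<forall>j<m. A i j = (\<Sum>l<k. B l i j))"
proof -
  \<comment> \<open>Decompose the first \<open>m'\<close> columns, one rank-one term per nonzero column.\<close>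
  have "\<exists>(k::nat) B. (\<forall>l<k. nonneg_mat n m (B l) \<and> rank_one n m (B l))
              \<and> (\<forall>i<n. \<forall>j<m. (if j < m' then A i j else 0) = (\<Sum>l<k. B l i j))" for m'
  proof (induction m')
    case 0
    show ?case by (rule exI[where x = "0::nat"]) simp
  next
    case (Suc m')
    then obtain k :: nat and B where B: "\<forall>l<k. nonneg_mat n m (B l) \<and> rank_one n m (B l)"
      and sums: "\<forall>i<n. \<forall>j<m. (if j < m' then A i j else 0) = (\<Sum>l<k. B l i j)" by blast
    show ?case
    proof (cases "m' < m \<and> (\<exists>i<n. A i m' \<noteq> 0)")
      case True
      define B' where "B' = B(k := (\<lambda>i j. if j = m' then A i m' else 0))"
      have "\<forall>l<Suc k. nonneg_mat n m (B' l) \<and> rank_one n m (B' l)"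
        using B A rank_one_column[of m' m n A] True
        by (auto simp: B'_def nonneg_mat_def less_Suc_eq)
      moreover have "(if j < Suc m' then A i j else 0) = (\<Sum>l<Suc k. B' l i j)"
        if "i < n" "j < m" for i j
      proof -
        have "(if j < m' then A i j else 0) = (\<Sum>l<k. B l i j)" using sums that by blast
        then show ?thesis by (auto simp: B'_def less_Suc_eq)
      qed
      ultimately show ?thesis by blast
    next
      case False
      have "(if j < Suc m' then A i j else 0) = (\<Sum>l<k. B l i j)" if "i < n" "j < m" for i j
      proof -
        have "(if j < m' then A i j else 0) = (\<Sum>l<k. B l i j)" using sums that by blast
        then show ?thesis using False that by (auto simp: less_Suc_eq)
      qed
      then show ?thesis using B by blast
    qed
  qed
  from this[of m] show ?thesis by auto
qed

lemma nnrank_decomposition: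
  assumes "nonneg_mat n m A"
  obtains B where "\<forall>l<nnrank n m A. nonneg_mat n m (B l) \<and> rank_one n m (B l)"
    and "\<forall>i<n. \<forall>j<m. A i j = (\<Sum>l<nnrank n m A. B l i j)"
  using LeastI_ex[OF nonneg_rank_one_decomposition_exists[OF assms]] that
  unfolding nnrank_def by blast

text \<open>Normalising each rank-one term \<open>u v\<^sup>T\<close> so that \<open>u\<close> sums to one gives a factorisation
  \<open>A = U V\<close> with \<open>U\<close> column-stochastic.\<close>
lemma nonneg_factorization:
  assumes B: "\<forall>l<k. nonneg_mat n m (B l) \<and> rank_one n m (B l)"
    and A: "\<forall>i<n. \<forall>j<m. A i j = (\<Sum>l<k. B l i j)"
  shows "\<exists>U V. nonneg_mat n k U \<and> col_stochastic n k U \<and> nonneg_mat k m V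
           \<and> (\<forall>i<n. \<forall>j<m. A i j = (\<Sum>l<k. U i l * V l j))"
proof -
  obtain u v where uv: "\<forall>l<k. (\<exists>i<n. u l i \<noteq> (0::real)) \<and> (\<forall>i<n. \<forall>j<m. B l i j = u l i * v l j)"
    using B unfolding rank_one_def by metis
  define s where "s l = (\<Sum>i<n. \<bar>u l i\<bar>)" for l
  define U where "U i l = \<bar>u l i\<bar> / s l" for i l
  define V where "V l j = s l * \<bar>v l j\<bar>" for l j
  have s_pos: "s l > 0" if l: "l < k" for l
  proof -
    obtain i where "i < n" "u l i \<noteq> 0" using uv l by blast
    then show ?thesis unfolding s_def by (intro sum_pos2[of _ i]) auto
  qed
  have "B l i j = \<bar>u l i\<bar> * \<bar>v l j\<bar>" if "l < k" "i < n" "j < m" for l i j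
  proof -
    have "B l i j = u l i * v l j" "0 \<le> B l i j"
      using B uv that unfolding nonneg_mat_def by auto
    then show ?thesis by (simp add: abs_mult[symmetric])
  qed
  moreover have "U i l * V l j = \<bar>u l i\<bar> * \<bar>v l j\<bar>" if "l < k" for i j l
    using s_pos[OF that] by (simp add: U_def V_def)
  ultimately have "A i j = (\<Sum>l<k. U i l * V l j)" if "i < n" "j < m" for i j
    using A that by (auto intro!: sum.cong)
  moreover have "nonneg_mat n k U" "nonneg_mat k m V"
    using s_pos by (auto simp: nonneg_mat_def U_def V_def less_imp_le)
  moreover have "(\<Sum>i<n. U i l) = 1" if "l < k" for l
    using s_pos[OF that] by (simp add: U_def s_def sum_divide_distrib[symmetric])
  then have "col_stochastic n k U" by (simp add: col_stochastic_def)
  ultimately show ?thesis by blast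
qed

lemma col_stochastic_right_factor:
  assumes "col_stochastic n m A" "col_stochastic n k U"
    and AUV: "\<forall>i<n. \<forall>j<m. A i j = (\<Sum>l<k. U i l * V l j)"
  shows "col_stochastic k m V"
  unfolding col_stochastic_def
proof (intro allI impI)
  fix j assume "j < m"
  then have "1 = (\<Sum>i<n. \<Sum>l<k. U i l * V l j)"
    using assms(1) AUV by (simp add: col_stochastic_def)
  also have "\<dots> = (\<Sum>l<k. V l j * (\<Sum>i<n. U i l))"
    by (subst sum.swap) (simp add: sum_distrib_left mult.commute)
  also have "\<dots> = (\<Sum>l<k. V l j)" using assms(2) by (simp add: col_stochastic_def)
  finally show "(\<Sum>l<k. V l j) = 1" by simp
qed

lemma stochastic_factorization:
  assumes "nonneg_mat n m A" "col_stochastic n m A"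
  shows "\<exists>U V. nonneg_mat n (nnrank n m A) U \<and> col_stochastic n (nnrank n m A) U
           \<and> nonneg_mat (nnrank n m A) m V \<and> col_stochastic (nnrank n m A) m V
           \<and> (\<forall>i<n. \<forall>j<m. A i j = (\<Sum>l<nnrank n m A. U i l * V l j))"
proof -
  obtain B where "\<forall>l<nnrank n m A. nonneg_mat n m (B l) \<and> rank_one n m (B l)"
    and "\<forall>i<n. \<forall>j<m. A i j = (\<Sum>l<nnrank n m A. B l i j)"
    using nnrank_decomposition[OF assms(1)] .
  then obtain U V where "nonneg_mat n (nnrank n m A) U" "col_stochastic n (nnrank n m A) U"
    "nonneg_mat (nnrank n m A) m V" "\<forall>i<n. \<forall>j<m. A i j = (\<Sum>l<nnrank n m A. U i l * V l j)"
    using nonneg_factorization by blast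
  moreover have "col_stochastic (nnrank n m A) m V"
    using col_stochastic_right_factor[OF assms(2)] calculation by blast
  ultimately show ?thesis by blast
qed

lemma is_subspace_colspace: "is_subspace (colspace n m A)"
  unfolding is_subspace_def colspace_def
proof (intro ballI allI)
  fix x y a b assume "x \<in> {x. \<exists>c. x = (\<lambda>i. \<Sum>j<m. c j * column n A j i)}"
    and "y \<in> {x. \<exists>c. x = (\<lambda>i. \<Sum>j<m. c j * column n A j i)}"
  then obtain c d where "x = (\<lambda>i. \<Sum>j<m. c j * column n A j i)" "y = (\<lambda>i. \<Sum>j<m. d j * column n A j i)"
    by blast
  then have "\<exists>e. (\<lambda>i. a * x i + b * y i) = (\<lambda>i. \<Sum>j<m. e j * column n A j i)"
    by (intro exI[of _ "\<lambda>j. a * c j + b * d j"]) (simp add: sum_distrib_left sum.distrib algebra_simps)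
  then show "(\<lambda>i. a * x i + b * y i) \<in> {x. \<exists>c. x = (\<lambda>i. \<Sum>j<m. c j * column n A j i)}" by simp
qed

lemma column_in_colspace: "j < m \<Longrightarrow> column n A j \<in> colspace n m A"
  unfolding colspace_def
  by (intro CollectI exI[of _ "\<lambda>j'. if j' = j then 1 else 0"])
     (simp add: if_distrib[of "\<lambda>c. c * _"] cong: if_cong)

lemma column_in_simplex:
  "nonneg_mat n m A \<Longrightarrow> col_stochastic n m A \<Longrightarrow> j < m \<Longrightarrow> column n A j \<in> simplex n"
  by (simp add: simplex_def column_def euc_def nonneg_mat_def col_stochastic_def)

lemma mat_vec_column:
  assumes "\<forall>i<n. \<forall>j<m. A i j = (\<Sum>l<k. U i l * V l j)" "j < m"
  shows "column n A j = mat_vec n k U (column k V j)"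
  using assms by (simp add: column_def mat_vec_def fun_eq_iff)

lemma mat_vec_simplex:
  assumes "nonneg_mat n k U" "col_stochastic n k U" "y \<in> simplex k"
  shows "mat_vec n k U y \<in> simplex n"
proof -
  have "(\<Sum>i<n. \<Sum>l<k. U i l * y l) = (\<Sum>l<k. y l * (\<Sum>i<n. U i l))"
    by (subst sum.swap) (simp add: sum_distrib_left mult.commute)
  also have "\<dots> = 1" using assms(2,3) by (simp add: col_stochastic_def simplex_def)
  moreover have "0 \<le> (\<Sum>l<k. U i l * y l)" if "i < n" for i
    using assms(1,3) that by (intro sum_nonneg) (simp add: simplex_def nonneg_mat_def)
  ultimately show ?thesis by (simp add: simplex_def mat_vec_def euc_def)
qed

lemma mat_vec_colspace:
  assumes AUV: "\<forall>i<n. \<forall>j<m. A i j = (\<Sum>l<k. U i l * V l j)" and y: "y \<in> colspace k m V"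
  shows "mat_vec n k U y \<in> colspace n m A"
proof -
  obtain c where c: "y = (\<lambda>l. \<Sum>j<m. c j * column k V j l)" using y by (auto simp: colspace_def)
  have "mat_vec n k U y = (\<lambda>i. \<Sum>j<m. c j * mat_vec n k U (column k V j) i)"
    by (simp add: c mat_vec_def fun_eq_iff sum_distrib_left mult.left_commute sum.swap[of _ "{..<k}"])
  also have "\<dots> = (\<lambda>i. \<Sum>j<m. c j * column n A j i)"
    using mat_vec_column[OF AUV] by simp
  finally show ?thesis unfolding colspace_def by blast
qed

theorem proposition1:
  fixes n m r :: nat and A :: "nat \<Rightarrow> nat \<Rightarrow> real"
  assumes "nonneg_mat n m A"
    and "col_stochastic n m A"
    and "nnrank n m A \<le> r"
  shows "\<exists>P. polytope n P \<and> P_in n m A \<subseteq> P \<and> P \<subseteq> P_out n m A \<and> ic n P \<le> r"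
proof -
  define k where "k = nnrank n m A"
  obtain U V where U: "nonneg_mat n k U" "col_stochastic n k U"
    and V: "nonneg_mat k m V" "col_stochastic k m V"
    and AUV: "\<forall>i<n. \<forall>j<m. A i j = (\<Sum>l<k. U i l * V l j)"
    using stochastic_factorization[OF assms(1,2)] unfolding k_def by blast
  obtain ws where ws: "colspace k m V = solutions k ws" using colspace_eq_solutions by blast
  define P where "P = mat_vec n k U ` (simplex k \<inter> colspace k m V)"
  have "polytope n P"
    unfolding P_def by (rule polytope_mat_vec_simplex_Int[OF is_subspace_colspace])
  moreover have "P_in n m A \<subseteq> P"
    unfolding P_in_def P_def
    using is_subspace_colspace affine_map_mat_vec mat_vec_column[OF AUV]
      column_in_simplex[OF V] column_in_colspace
    by (intro convhull_minimal is_convex_image is_convex_Int is_convex_simplex is_convex_subspace)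
       auto
  moreover have "P \<subseteq> P_out n m A"
    unfolding P_def P_out_def using mat_vec_simplex[OF U] mat_vec_colspace[OF AUV] by auto
  moreover have "ic n P \<le> k"
    unfolding P_def ws by (rule ic_mat_vec_simplex_Int_solutions)
  then have "ic n P \<le> r" using assms(3) by (simp add: k_def)
  ultimately show ?thesis by blast
qed

end
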